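(* Let $F$ be a nontrivial finite group, $\tfrac12<p<1$, and let $R_n=((L_n(i))_i,S_n)$ be the stationary random walk on $F\wr\mathbb{Z}$ with parameter $p$. Let $\rho_0=0$ and $\rho_k=\inf\{n>\rho_{k-1}:S_n=0\}$, and for $k\ge1$ let $M_k^+=\max_{0\le j\le\rho_k}S_j$ and $M_k^-=\min_{0\le j\le\rho_k}S_j$. Then for every $k\ge1$, \[\Pr(R_{\rho_k}=\mathrm{id}\mid S_0,S_1,\dots,S_{\rho_k})=|F|^{-(M_k^+-M_k^-+1)}.\]
   Context: Elements of $F\wr\mathbb{Z}$ are pairs $((L(i))_{i\in\mathbb{Z}},x)$ with $L:\mathbb{Z}\to F$ finitely supported and $x\in\mathbb{Z}$; $\mathrm{id}$ has all lamps $\mathrm{id}_F$ and $x=0$. $(S_n)$ is the Markov chain on $\mathbb{Z}$ with $S_0=0$ and $\Pr(S_{n+1}=x+1\mid S_n=x)$ equal to $p,\tfrac12,1-p$ for $x<0,x=0,x>0$ respectively, and $\Pr(S_{n+1}=x-1\mid S_n=x)$ equal to $1-p,\tfrac12,p$ respectively. $(U_n,V_n)_{n\ge1}$ are i.i.d. pairs of independent uniform elements of $F$, independent of $(S_n)$; $L_0\equiv\mathrm{id}_F$, $L_{n+1}(i)=L_n(i)$ for $i\notin\{S_n,S_{n+1}\}$, $L_{n+1}(S_n)=U_{n+1}$, $L_{n+1}(S_{n+1})=V_{n+1}$. The times $\rho_k$ are a.s. finite. *)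

theory Defs
  imports "HOL-Probability.Probability" "HOL-Algebra.Group"
begin

definition trans_prob :: "real \<Rightarrow> int \<Rightarrow> int \<Rightarrow> real" where
  "trans_prob p x y =
     (if y = x + 1 then (if x < 0 then p else if x = 0 then 1/2 else 1 - p)
      else if y = x - 1 then (if x < 0 then 1 - p else if x = 0 then 1/2 else p)
      else 0)"

definition path_prob :: "real \<Rightarrow> (nat \<Rightarrow> int) \<Rightarrow> nat \<Rightarrow> real" where
  "path_prob p xs n =
     (if xs 0 = 0 then (\<Prod>j<n. trans_prob p (xs j) (xs (Suc j))) else 0)"

fun lamps :: "'f \<Rightarrow> (nat \<Rightarrow> int) \<Rightarrow> (nat \<Rightarrow> 'f) \<Rightarrow> (nat \<Rightarrow> 'f) \<Rightarrow> nat \<Rightarrow> int \<Rightarrow> 'f" where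
  "lamps e s u v 0 = (\<lambda>i. e)"
| "lamps e s u v (Suc n) =
     ((lamps e s u v n)(s n := u (Suc n)))(s (Suc n) := v (Suc n))"

fun rho :: "(nat \<Rightarrow> int) \<Rightarrow> nat \<Rightarrow> nat" where
  "rho s 0 = 0"
| "rho s (Suc k) = (LEAST n. n > rho s k \<and> s n = 0)"

end

theory Submission
  imports Defs
begin

(*
  Given the path S_0, ..., S_m, the lamp at a site visited by time m carries the value
  written at the last time the walker stood on it or left it; distinct visited sites read
  distinct coordinates among the 2m independent uniform lamp choices, and unvisited lamps
  are the identity. So all lamps are off with conditional probability |F|^-(number of
  visited sites), and a nearest-neighbour path from 0 visits exactly Max - Min + 1 sites.

  It remains to see that the event rho_k = m is, up to a null set, decided by S_0, ..., S_m.
  This holds on paths with infinitely many returns to 0 (which also avoids the unspecified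
  LEAST in rho), and for p > 1/2 almost every path is such: away from 0 the walk drifts to 0,
  so E[|S_N|; no return in (r, N]] drops by (2p - 1) P(no return in (r, N]) at each step,
  which forces the latter probability to 0.
*)

fun nn_paths :: "nat \<Rightarrow> (nat \<Rightarrow> int) set" where
  "nn_paths 0 = {restrict (\<lambda>_. 0) {..0}}"
| "nn_paths (Suc N) = (\<lambda>(ys, d). ys(Suc N := ys N + d)) ` (nn_paths N \<times> {-1, 1})"

lemma nn_pathsD:
  assumes "ys \<in> nn_paths N"
  shows "ys \<in> extensional {..N}" and "ys 0 = 0" and "\<And>j. j < N \<Longrightarrow> \<bar>ys (Suc j) - ys j\<bar> = 1"
proof -
  have "ys \<in> extensional {..N} \<and> ys 0 = 0 \<and> (\<forall>j<N. \<bar>ys (Suc j) - ys j\<bar> = 1)"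
    using assms
  proof (induction N arbitrary: ys)
    case (Suc N)
    then obtain zs d where "zs \<in> nn_paths N" "d \<in> {-1, 1}" "ys = zs(Suc N := zs N + d)"
      by auto
    with Suc.IH show ?case
      by (auto simp: extensional_def less_Suc_eq)
  qed auto
  then show "ys \<in> extensional {..N}" "ys 0 = 0" "\<And>j. j < N \<Longrightarrow> \<bar>ys (Suc j) - ys j\<bar> = 1"
    by auto
qed

lemma finite_nn_paths: "finite (nn_paths N)"
  by (induction N) auto

lemma inj_on_nn_paths_extend:
  "inj_on (\<lambda>(ys, d). ys(Suc N := ys N + d)) (nn_paths N \<times> {-1, 1})"
proof (rule inj_onI, clarify)
  fix ys zs :: "nat \<Rightarrow> int" and d d' :: int
  assume ys: "ys \<in> nn_paths N" and zs: "zs \<in> nn_paths N"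
    and eq: "ys(Suc N := ys N + d) = zs(Suc N := zs N + d')"
  have "ys (Suc N) = zs (Suc N)"
    using nn_pathsD(1)[OF ys] nn_pathsD(1)[OF zs] by (simp add: extensional_def)
  then have "ys = zs"
    using eq by (metis fun_upd_triv fun_upd_upd)
  with eq show "ys = zs \<and> d = d'"
    by (metis add_left_cancel fun_upd_same)
qed

lemma path_prob_Suc_upd:
  "path_prob p (ys(Suc N := y)) (Suc N) = path_prob p ys N * trans_prob p (ys N) y"
proof -
  have "(\<Prod>j<N. trans_prob p ((ys(Suc N := y)) j) ((ys(Suc N := y)) (Suc j)))
      = (\<Prod>j<N. trans_prob p (ys j) (ys (Suc j)))"
    by (intro prod.cong) auto
  then show ?thesis
    by (simp add: path_prob_def)
qed

lemma sum_nn_paths_Suc: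
  "(\<Sum>ys\<in>nn_paths (Suc N). path_prob p ys (Suc N) * f ys) =
   (\<Sum>ys\<in>nn_paths N. path_prob p ys N *
      (\<Sum>d\<in>{-1, 1}. trans_prob p (ys N) (ys N + d) * f (ys(Suc N := ys N + d))))"
proof -
  have "(\<Sum>ys\<in>nn_paths (Suc N). path_prob p ys (Suc N) * f ys) =
      (\<Sum>(ys, d)\<in>nn_paths N \<times> {-1, 1}.
         path_prob p (ys(Suc N := ys N + d)) (Suc N) * f (ys(Suc N := ys N + d)))"
    unfolding nn_paths.simps sum.reindex[OF inj_on_nn_paths_extend] by (simp add: case_prod_beta)
  also have "\<dots> = (\<Sum>ys\<in>nn_paths N. path_prob p ys N *
      (\<Sum>d\<in>{-1, 1}. trans_prob p (ys N) (ys N + d) * f (ys(Suc N := ys N + d))))"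
    by (simp add: sum.cartesian_product[symmetric] sum_distrib_left path_prob_Suc_upd algebra_simps)
  finally show ?thesis .
qed

lemma sum_trans_prob: "(\<Sum>d\<in>{-1, 1}. trans_prob p x (x + d)) = 1"
  by (simp add: trans_prob_def)

lemma trans_prob_nonneg: "0 \<le> p \<Longrightarrow> p \<le> 1 \<Longrightarrow> 0 \<le> trans_prob p x y"
  by (simp add: trans_prob_def)

lemma path_prob_nonneg: "0 \<le> p \<Longrightarrow> p \<le> 1 \<Longrightarrow> 0 \<le> path_prob p ys N"
  by (simp add: path_prob_def trans_prob_nonneg prod_nonneg)

lemma sum_path_prob_nn_paths: "(\<Sum>ys\<in>nn_paths N. path_prob p ys N) = 1"
proof (induction N)
  case (Suc N)
  show ?case
    using sum_nn_paths_Suc[of p N "\<lambda>_. 1"] by (simp add: sum_trans_prob Suc.IH)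
qed (simp add: path_prob_def)

lemma image_unit_steps_interval:
  fixes f :: "nat \<Rightarrow> int"
  assumes "\<And>j. j < m \<Longrightarrow> \<bar>f (Suc j) - f j\<bar> = 1"
  shows "\<exists>a b. f ` {0..m} = {a..b}"
  using assms
proof (induction m)
  case (Suc m)
  then obtain a b where ab: "f ` {0..m} = {a..b}"
    by auto
  then have "f m \<in> {a..b}" and "\<bar>f (Suc m) - f m\<bar> = 1"
    using Suc.prems by auto
  then have "insert (f (Suc m)) {a..b} = {min a (f (Suc m))..max b (f (Suc m))}"
    by auto
  moreover have "f ` {0..Suc m} = insert (f (Suc m)) (f ` {0..m})"
    by (auto simp: atLeast0_atMost_Suc)
  ultimately show ?case
    using ab by auto
qed (intro exI[of _ "f 0"], simp)

lemma card_image_unit_steps: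
  fixes f :: "nat \<Rightarrow> int"
  assumes "\<And>j. j < m \<Longrightarrow> \<bar>f (Suc j) - f j\<bar> = 1"
  shows "int (card (f ` {0..m})) = Max (f ` {0..m}) - Min (f ` {0..m}) + 1"
proof -
  obtain a b where ab: "f ` {0..m} = {a..b}"
    using image_unit_steps_interval[of m f] assms by blast
  have "f 0 \<in> {a..b}"
    using ab[symmetric] by auto
  then have "a \<le> b"
    by simp
  have "Max {a..b} = b" and "Min {a..b} = a"
    using \<open>a \<le> b\<close> by (auto intro: Max_eqI Min_eqI)
  then show ?thesis
    using ab \<open>a \<le> b\<close> by simp
qed

definition rewrite_times :: "(nat \<Rightarrow> int) \<Rightarrow> nat \<Rightarrow> int \<Rightarrow> nat set" where
  "rewrite_times s n i = {j \<in> {1..n}. s j = i \<or> s (j - 1) = i}"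

definition last_rewrite :: "(nat \<Rightarrow> int) \<Rightarrow> nat \<Rightarrow> int \<Rightarrow> nat" where
  "last_rewrite s n i = Max (rewrite_times s n i)"

lemma finite_rewrite_times [simp]: "finite (rewrite_times s n i)"
  by (simp add: rewrite_times_def)

lemma lamps_eq_last_rewrite:
  "lamps e s u v n i =
     (if rewrite_times s n i = {} then e
      else if s (last_rewrite s n i) = i then v (last_rewrite s n i) else u (last_rewrite s n i))"
  unfolding last_rewrite_def
proof (induction n)
  case (Suc n)
  show ?case
  proof (cases "s (Suc n) = i \<or> s n = i")
    case True
    then have "rewrite_times s (Suc n) i = insert (Suc n) (rewrite_times s n i)"
      by (auto simp: rewrite_times_def)
    moreover have "Max (insert (Suc n) (rewrite_times s n i)) = Suc n"
      by (rule Max_eqI) (auto simp: rewrite_times_def)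
    ultimately show ?thesis
      using True by auto
  next
    case False
    then have "rewrite_times s (Suc n) i = rewrite_times s n i"
      by (auto simp: rewrite_times_def le_Suc_eq)
    with False Suc.IH show ?thesis
      by auto
  qed
qed (simp add: rewrite_times_def)

lemma rewrite_times_eq_empty_iff:
  assumes "1 \<le> n"
  shows "rewrite_times s n i = {} \<longleftrightarrow> i \<notin> s ` {..n}"
proof
  assume "i \<notin> s ` {..n}"
  then show "rewrite_times s n i = {}"
    by (force simp: rewrite_times_def)
next
  assume "rewrite_times s n i = {}"
  then have "s j \<noteq> i" if "j \<le> n" for j
    using that assms by (cases j) (auto simp: rewrite_times_def)
  then show "i \<notin> s ` {..n}"
    by auto
qed

lemma last_rewrite_in:
  assumes "1 \<le> n" "i \<in> s ` {..n}"
  shows "last_rewrite s n i \<in> rewrite_times s n i"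
  unfolding last_rewrite_def using assms rewrite_times_eq_empty_iff[OF assms(1)] by (intro Max_in) auto

lemma card_visited_sites:
  fixes s :: "nat \<Rightarrow> int"
  assumes "1 \<le> m"
  defines "Vu \<equiv> {i \<in> s ` {..m}. s (last_rewrite s m i) \<noteq> i}"
    and "Vv \<equiv> {i \<in> s ` {..m}. s (last_rewrite s m i) = i}"
  shows "card (s ` {..m}) = card (last_rewrite s m ` Vu) + card (last_rewrite s m ` Vv)"
proof -
  have "s (last_rewrite s m i - 1) = i" if "i \<in> Vu" for i
    using that last_rewrite_in[OF assms(1), of i s] by (auto simp: Vu_def rewrite_times_def)
  then have "inj_on (last_rewrite s m) Vu"
    by (metis inj_onI)
  moreover have "inj_on (last_rewrite s m) Vv"
    by (rule inj_onI) (auto simp: Vv_def)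
  moreover have "s ` {..m} = Vu \<union> Vv" "Vu \<inter> Vv = {}" "finite Vu" "finite Vv"
    by (auto simp: Vu_def Vv_def)
  ultimately show ?thesis
    by (simp add: card_Un_disjoint card_image)
qed

lemma lamps_cong:
  "(\<And>j. j \<le> n \<Longrightarrow> s j = s' j) \<Longrightarrow> (\<And>j. j \<in> {1..n} \<Longrightarrow> u j = u' j \<and> v j = v' j) \<Longrightarrow>
    lamps e s u v n = lamps e s' u' v' n"
  by (induction n) auto

lemma card_PiE_const_on:
  assumes "finite I" "K \<subseteq> I" "c \<in> C"
  shows "card {f \<in> PiE I (\<lambda>_. C). \<forall>t\<in>K. f t = c} = card C ^ card (I - K)"
proof -
  have "{f \<in> PiE I (\<lambda>_. C). \<forall>t\<in>K. f t = c} = PiE I (\<lambda>t. if t \<in> K then {c} else C)"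
    using assms by (auto simp: PiE_def Pi_def split: if_splits)
  then have "card {f \<in> PiE I (\<lambda>_. C). \<forall>t\<in>K. f t = c} = (\<Prod>t\<in>I. if t \<in> K then 1 else card C)"
    using assms(1) by (auto simp: card_PiE intro!: prod.cong)
  also have "\<dots> = card C ^ card (I - K)"
    using assms(1,2) by (simp add: prod.If_cases Diff_eq Int_absorb1)
  finally show ?thesis .
qed

lemma card_lamp_choices_all_off:
  assumes "finite C" "e \<in> C" "1 \<le> m"
  shows "card {(u, v). u \<in> PiE {1..m} (\<lambda>_. C) \<and> v \<in> PiE {1..m} (\<lambda>_. C) \<and>
                       (\<forall>i. lamps e s u v m i = e)} * card C ^ card (s ` {..m})
         = card C ^ (2 * m)" (is "card ?Off * _ = _")
proof -
  define Vu where "Vu = {i \<in> s ` {..m}. s (last_rewrite s m i) \<noteq> i}"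
  define Vv where "Vv = {i \<in> s ` {..m}. s (last_rewrite s m i) = i}"
  define Ku where "Ku = last_rewrite s m ` Vu"
  define Kv where "Kv = last_rewrite s m ` Vv"
  have K_range: "Ku \<subseteq> {1..m}" "Kv \<subseteq> {1..m}"
    using last_rewrite_in[OF assms(3)] by (auto simp: Ku_def Kv_def Vu_def Vv_def rewrite_times_def)
  have "lamps e s u v m = (\<lambda>i. if i \<in> Vv then v (last_rewrite s m i)
                               else if i \<in> Vu then u (last_rewrite s m i) else e)" for u v
    using rewrite_times_eq_empty_iff[OF assms(3)]
    by (auto simp: fun_eq_iff lamps_eq_last_rewrite Vu_def Vv_def)
  then have "?Off = {u \<in> PiE {1..m} (\<lambda>_. C). \<forall>t\<in>Ku. u t = e} \<times> {v \<in> PiE {1..m} (\<lambda>_. C). \<forall>t\<in>Kv. v t = e}"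
    by (auto simp: Ku_def Kv_def Vu_def Vv_def split: if_splits)
  then have "card ?Off = card C ^ card ({1..m} - Ku) * card C ^ card ({1..m} - Kv)"
    using K_range assms(2) by (simp add: card_cartesian_product card_PiE_const_on)
  moreover have "card ({1..m} - Ku) + card ({1..m} - Kv) + card (s ` {..m}) = 2 * m"
    using K_range card_visited_sites[OF assms(3), of s] card_mono[OF _ K_range(1)] card_mono[OF _ K_range(2)]
    by (simp add: Ku_def Kv_def Vu_def Vv_def card_Diff_subset finite_subset)
  ultimately show ?thesis
    by (metis power_add)
qed

lemma rho_less_rho_Suc:
  assumes "\<exists>\<^sub>\<infinity>n. s n = 0"
  shows "rho s k < rho s (Suc k)" and "s (rho s (Suc k)) = 0"
proof -
  have "\<exists>n>rho s k. s n = 0"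
    using assms by (simp add: INFM_nat)
  from LeastI_ex[OF this] show "rho s k < rho s (Suc k)" and "s (rho s (Suc k)) = 0"
    by simp_all
qed

lemma rho_agree:
  assumes s: "\<exists>\<^sub>\<infinity>n. s n = 0" and s': "\<exists>\<^sub>\<infinity>n. s' n = 0"
    and agree: "\<And>j. j \<le> m \<Longrightarrow> s j = s' j"
  shows "rho s k \<le> m \<Longrightarrow> rho s' k = rho s k"
proof (induction k)
  case (Suc k)
  let ?r = "rho s k" and ?n = "rho s (Suc k)"
  have "?r < ?n" and "s ?n = 0"
    using rho_less_rho_Suc[OF s] by auto
  with Suc have IH: "rho s' k = ?r"
    by simp
  have "(LEAST n. ?r < n \<and> s' n = 0) = ?n"
  proof (rule Least_equality)
    show "?r < ?n \<and> s' ?n = 0"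
      using \<open>?r < ?n\<close> \<open>s ?n = 0\<close> agree Suc.prems by simp
  next
    fix n assume n: "?r < n \<and> s' n = 0"
    show "?n \<le> n"
    proof (cases "n \<le> m")
      case True
      with n agree have "?r < n \<and> s n = 0"
        by simp
      then show ?thesis
        by (simp add: Least_le)
    qed (use Suc.prems in simp)
  qed
  with IH show ?case
    by simp
qed simp

lemma cutoff_infinitely_many_zeros:
  fixes s :: "nat \<Rightarrow> int"
  shows "\<exists>\<^sub>\<infinity>n. (if n \<le> m then s n else 0) = 0"
proof -
  have "\<exists>n>r. (if n \<le> m then s n else 0) = 0" for r
    by (rule exI[of _ "Suc (max r m)"]) auto
  then show ?thesis
    by (simp add: INFM_nat)
qed

lemma rho_eq_iff_cutoff:
  assumes "\<exists>\<^sub>\<infinity>n. s n = 0"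
  shows "rho s k = m \<longleftrightarrow> rho (\<lambda>j. if j \<le> m then s j else 0) k = m"
  using rho_agree[OF assms cutoff_infinitely_many_zeros[of m s], of m k]
    rho_agree[OF cutoff_infinitely_many_zeros[of m s] assms, of m k]
  by auto

definition avoids_zero :: "nat \<Rightarrow> nat \<Rightarrow> (nat \<Rightarrow> int) \<Rightarrow> bool" where
  "avoids_zero r N ys \<longleftrightarrow> (\<forall>n\<in>{r<..N}. ys n \<noteq> 0)"

text \<open>In probabilistic notation, \<open>avoid_prob p r N\<close> is P(S avoids 0 on (r, N]) and
  \<open>avoid_mean_abs p r N\<close> is E[|S_N|; S avoids 0 on (r, N]].\<close>

definition avoid_prob :: "real \<Rightarrow> nat \<Rightarrow> nat \<Rightarrow> real" where
  "avoid_prob p r N = (\<Sum>ys\<in>nn_paths N. path_prob p ys N * of_bool (avoids_zero r N ys))"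

definition avoid_mean_abs :: "real \<Rightarrow> nat \<Rightarrow> nat \<Rightarrow> real" where
  "avoid_mean_abs p r N =
     (\<Sum>ys\<in>nn_paths N. path_prob p ys N * (of_bool (avoids_zero r N ys) * \<bar>real_of_int (ys N)\<bar>))"

lemma avoids_zero_Suc_upd:
  "r \<le> N \<Longrightarrow> avoids_zero r (Suc N) (ys(Suc N := y)) \<longleftrightarrow> avoids_zero r N ys \<and> y \<noteq> 0"
  by (auto simp: avoids_zero_def le_Suc_eq)

lemma avoids_zero_Suc_updD:
  assumes "avoids_zero r (Suc N) (ys(Suc N := y))"
  shows "avoids_zero r N ys"
  unfolding avoids_zero_def
proof
  fix n assume "n \<in> {r<..N}"
  then have "n \<in> {r<..Suc N}" and "n \<noteq> Suc N"
    by auto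
  with assms show "ys n \<noteq> 0"
    unfolding avoids_zero_def by force
qed

lemma trans_prob_drift:
  "x \<noteq> 0 \<Longrightarrow>
    (\<Sum>d\<in>{-1, 1}. trans_prob p x (x + d) * \<bar>real_of_int (x + d)\<bar>) = \<bar>real_of_int x\<bar> - (2 * p - 1)"
  by (auto simp: trans_prob_def algebra_simps)

lemma avoid_mean_abs_Suc:
  assumes "r < N"
  shows "avoid_mean_abs p r (Suc N) = avoid_mean_abs p r N - (2 * p - 1) * avoid_prob p r N"
proof -
  have step: "(\<Sum>d\<in>{-1, 1}. trans_prob p (ys N) (ys N + d) *
          (of_bool (avoids_zero r (Suc N) (ys(Suc N := ys N + d))) * \<bar>real_of_int (ys N + d)\<bar>))
      = of_bool (avoids_zero r N ys) * \<bar>real_of_int (ys N)\<bar> - (2 * p - 1) * of_bool (avoids_zero r N ys)"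
    for ys :: "nat \<Rightarrow> int"
  proof (cases "avoids_zero r N ys")
    case True
    then have "ys N \<noteq> 0"
      using assms by (simp add: avoids_zero_def)
    with True show ?thesis
      using assms by (simp add: avoids_zero_Suc_upd trans_prob_drift[symmetric] cong: sum.cong)
  qed (use assms in \<open>simp add: avoids_zero_Suc_upd\<close>)
  have "avoid_mean_abs p r (Suc N) = (\<Sum>ys\<in>nn_paths N. path_prob p ys N *
      (of_bool (avoids_zero r N ys) * \<bar>real_of_int (ys N)\<bar> - (2 * p - 1) * of_bool (avoids_zero r N ys)))"
    unfolding avoid_mean_abs_def sum_nn_paths_Suc fun_upd_same step ..
  also have "\<dots> = avoid_mean_abs p r N - (2 * p - 1) * avoid_prob p r N"
    unfolding avoid_mean_abs_def avoid_prob_def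
    by (simp add: right_diff_distrib sum_subtractf sum_distrib_left mult.left_commute)
  finally show ?thesis .
qed

lemma avoid_prob_Suc_le:
  assumes "0 \<le> p" "p \<le> 1"
  shows "avoid_prob p r (Suc N) \<le> avoid_prob p r N"
  unfolding avoid_prob_def sum_nn_paths_Suc
proof (intro sum_mono mult_left_mono)
  fix ys :: "nat \<Rightarrow> int"
  have "(\<Sum>d\<in>{-1, 1}. trans_prob p (ys N) (ys N + d) *
          of_bool (avoids_zero r (Suc N) (ys(Suc N := ys N + d))))
      \<le> (\<Sum>d\<in>{-1, 1}. trans_prob p (ys N) (ys N + d) * of_bool (avoids_zero r N ys))"
    using assms by (intro sum_mono mult_left_mono) (auto dest: avoids_zero_Suc_updD intro: trans_prob_nonneg)
  then show "(\<Sum>d\<in>{-1, 1}. trans_prob p (ys N) (ys N + d) *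
          of_bool (avoids_zero r (Suc N) (ys(Suc N := ys N + d))))
      \<le> of_bool (avoids_zero r N ys)"
    by (simp add: sum_distrib_right[symmetric] sum_trans_prob)
  show "0 \<le> path_prob p ys N"
    using assms by (rule path_prob_nonneg)
qed

lemma avoid_prob_le:
  assumes "1/2 < p" "p \<le> 1"
  shows "real t * (2 * p - 1) * avoid_prob p r (Suc r + t) \<le> avoid_mean_abs p r (Suc r)"
proof -
  define \<delta> where "\<delta> = 2 * p - 1"
  have "avoid_mean_abs p r (Suc r + t) + real t * \<delta> * avoid_prob p r (Suc r + t) \<le> avoid_mean_abs p r (Suc r)"
  proof (induction t)
    case (Suc t)
    let ?B = "avoid_prob p r (Suc r + t)" and ?B' = "avoid_prob p r (Suc r + Suc t)"
    have "?B' \<le> ?B"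
      using assms avoid_prob_Suc_le[of p r "Suc r + t"] by simp
    then have "real t * \<delta> * ?B' \<le> real t * \<delta> * ?B"
      using assms by (intro mult_left_mono) (auto simp: \<delta>_def)
    moreover have "avoid_mean_abs p r (Suc r + Suc t) = avoid_mean_abs p r (Suc r + t) - \<delta> * ?B"
      using avoid_mean_abs_Suc[of r "Suc r + t" p] by (simp add: \<delta>_def)
    moreover have "real (Suc t) * \<delta> * ?B' = real t * \<delta> * ?B' + \<delta> * ?B'"
      by (simp add: algebra_simps)
    moreover have "\<delta> * ?B' \<le> \<delta> * ?B"
      using \<open>?B' \<le> ?B\<close> assms by (intro mult_left_mono) (auto simp: \<delta>_def)
    ultimately show ?case
      using Suc.IH by linarith
  qed simp
  moreover have "0 \<le> avoid_mean_abs p r (Suc r + t)"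
    using assms unfolding avoid_mean_abs_def by (intro sum_nonneg mult_nonneg_nonneg path_prob_nonneg) auto
  ultimately show ?thesis
    unfolding \<delta>_def by linarith
qed

lemma avoid_prob_tendsto_0:
  assumes "1/2 < p" "p \<le> 1"
  shows "(\<lambda>N. avoid_prob p r N) \<longlonglongrightarrow> 0"
proof (rule LIMSEQ_offset[where k = "Suc r"], rule tendsto_sandwich)
  let ?c = "avoid_mean_abs p r (Suc r) / (2 * p - 1)"
  show "\<forall>\<^sub>F t in sequentially. 0 \<le> avoid_prob p r (t + Suc r)"
    using assms unfolding avoid_prob_def by (intro always_eventually allI sum_nonneg mult_nonneg_nonneg path_prob_nonneg) auto
  show "\<forall>\<^sub>F t in sequentially. avoid_prob p r (t + Suc r) \<le> ?c / real t"
    using eventually_ge_at_top[of 1]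
  proof (rule eventually_mono)
    fix t :: nat assume "1 \<le> t"
    then show "avoid_prob p r (t + Suc r) \<le> ?c / real t"
      using avoid_prob_le[OF assms, of t r] assms by (simp add: field_simps add.commute)
  qed
  show "(\<lambda>t. ?c / real t) \<longlonglongrightarrow> 0"
    by (rule lim_const_over_n)
qed simp

lemma measurable_rho [measurable]:
  assumes [measurable]: "\<And>j. X j \<in> measurable M (count_space UNIV)"
  shows "(\<lambda>w. rho (\<lambda>j. X j w) k) \<in> measurable M (count_space UNIV)"
proof (induction k)
  case (Suc k)
  note [measurable] = Suc
  show ?case
    by simp
qed simp

lemma measurable_lamps [measurable]:
  assumes [measurable]: "\<And>j. X j \<in> measurable M (count_space UNIV)"
    "\<And>j. Y j \<in> measurable M (count_space UNIV)" "\<And>j. Z j \<in> measurable M (count_space UNIV)"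
  shows "(\<lambda>w. lamps e (\<lambda>j. X j w) (\<lambda>j. Y j w) (\<lambda>j. Z j w) n i) \<in> measurable M (count_space UNIV)"
proof (induction n arbitrary: i)
  case (Suc n)
  note [measurable] = Suc
  have "(\<lambda>w. lamps e (\<lambda>j. X j w) (\<lambda>j. Y j w) (\<lambda>j. Z j w) (Suc n) i)
     = (\<lambda>w. if i = X (Suc n) w then Z (Suc n) w else if i = X n w then Y (Suc n) w
            else lamps e (\<lambda>j. X j w) (\<lambda>j. Y j w) (\<lambda>j. Z j w) n i)"
    by auto
  also have "\<dots> \<in> measurable M (count_space UNIV)"
    by measurable
  finally show ?case .
qed simp

text \<open>Only the carrier \<open>C\<close> of the lamp group and its identity \<open>e\<close> matter.\<close>

locale lamplighter_walk = prob_space M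
  for M :: "'w measure" and C :: "'f set" and e :: 'f and p :: real
    and S :: "nat \<Rightarrow> 'w \<Rightarrow> int" and U V :: "nat \<Rightarrow> 'w \<Rightarrow> 'f" +
  assumes finite_C: "finite C" and e_in_C: "e \<in> C"
    and p_gt: "1/2 < p" and p_le: "p \<le> 1"
    and measurable_S [measurable]: "\<And>n. S n \<in> measurable M (count_space UNIV)"
    and measurable_U [measurable]: "\<And>n. U n \<in> measurable M (count_space UNIV)"
    and measurable_V [measurable]: "\<And>n. V n \<in> measurable M (count_space UNIV)"
    and law: "\<And>n xs us vs. (\<forall>j. us j \<in> C \<and> vs j \<in> C) \<Longrightarrow>
      measure M {w \<in> space M. (\<forall>j\<le>n. S j w = xs j) \<and> (\<forall>j\<in>{1..n}. U j w = us j \<and> V j w = vs j)}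
      = path_prob p xs n / real (card C) ^ (2 * n)"
begin

definition lamp_pairs :: "nat \<Rightarrow> ((nat \<Rightarrow> 'f) \<times> (nat \<Rightarrow> 'f)) set" where
  "lamp_pairs N = PiE {1..N} (\<lambda>_. C) \<times> PiE {1..N} (\<lambda>_. C)"

definition histories :: "nat \<Rightarrow> ((nat \<Rightarrow> int) \<times> (nat \<Rightarrow> 'f) \<times> (nat \<Rightarrow> 'f)) set" where
  "histories N = nn_paths N \<times> lamp_pairs N"

definition history :: "nat \<Rightarrow> 'w \<Rightarrow> (nat \<Rightarrow> int) \<times> (nat \<Rightarrow> 'f) \<times> (nat \<Rightarrow> 'f)" where
  "history N w = (restrict (\<lambda>j. S j w) {..N}, restrict (\<lambda>j. U j w) {1..N}, restrict (\<lambda>j. V j w) {1..N})"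

lemma finite_lamp_pairs: "finite (lamp_pairs N)"
  using finite_C by (simp add: lamp_pairs_def finite_PiE)

lemma card_lamp_pairs: "card (lamp_pairs N) = card C ^ (2 * N)"
  by (simp add: lamp_pairs_def card_cartesian_product card_PiE power_add[symmetric] mult_2)

lemma finite_histories: "finite (histories N)"
  by (simp add: histories_def finite_nn_paths finite_lamp_pairs)

lemma sum_histories_Sigma:
  fixes f :: "(nat \<Rightarrow> int) \<Rightarrow> real"
  shows "(\<Sum>h\<in>histories N \<inter> Sigma A B. f (fst h))
         = (\<Sum>ys\<in>nn_paths N \<inter> A. f ys * real (card (lamp_pairs N \<inter> B ys)))"
proof -
  have "histories N \<inter> Sigma A B = Sigma (nn_paths N \<inter> A) (\<lambda>ys. lamp_pairs N \<inter> B ys)"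
    by (auto simp: histories_def)
  moreover have "(\<Sum>ys\<in>nn_paths N \<inter> A. \<Sum>uv\<in>lamp_pairs N \<inter> B ys. f ys)
      = (\<Sum>(ys, uv)\<in>Sigma (nn_paths N \<inter> A) (\<lambda>ys. lamp_pairs N \<inter> B ys). f ys)"
    by (rule sum.Sigma) (auto simp: finite_nn_paths finite_lamp_pairs)
  ultimately show ?thesis
    by (simp add: split_def mult.commute)
qed

lemma history_eq_iff:
  assumes "(ys, us, vs) \<in> histories N"
  shows "history N w = (ys, us, vs) \<longleftrightarrow>
           (\<forall>j\<le>N. S j w = ys j) \<and> (\<forall>j\<in>{1..N}. U j w = us j \<and> V j w = vs j)"
proof -
  have "ys \<in> extensional {..N}" "us \<in> extensional {1..N}" "vs \<in> extensional {1..N}"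
    using assms nn_pathsD(1) by (auto simp: histories_def lamp_pairs_def PiE_def)
  then show ?thesis
    by (auto simp: history_def restrict_def fun_eq_iff extensional_def)
qed

lemma history_atom:
  assumes "h \<in> histories N"
  shows "{w \<in> space M. history N w = h} \<in> sets M"
    and "measure M {w \<in> space M. history N w = h} = path_prob p (fst h) N / real (card C) ^ (2 * N)"
proof -
  obtain ys us vs where h: "h = (ys, us, vs)"
    by (metis prod.exhaust)
  \<comment> \<open>\<open>law\<close> asks for lamp values in \<open>C\<close> at every index, not only in \<open>{1..N}\<close>\<close>
  define us' where "us' j = (if j \<in> {1..N} then us j else e)" for j
  define vs' where "vs' j = (if j \<in> {1..N} then vs j else e)" for j
  have "\<forall>j. us' j \<in> C \<and> vs' j \<in> C"
    using assms e_in_C by (auto simp: h us'_def vs'_def histories_def lamp_pairs_def)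
  note law_atom = law[OF this, of N ys]
  have atom: "{w \<in> space M. history N w = h} =
      {w \<in> space M. (\<forall>j\<le>N. S j w = ys j) \<and> (\<forall>j\<in>{1..N}. U j w = us' j \<and> V j w = vs' j)}"
    using assms by (auto simp: h history_eq_iff us'_def vs'_def)
  then show "measure M {w \<in> space M. history N w = h} = path_prob p (fst h) N / real (card C) ^ (2 * N)"
    using law_atom by (simp add: h)
  show "{w \<in> space M. history N w = h} \<in> sets M"
    unfolding atom by measurable
qed

lemma measure_history_in_eq_sum:
  assumes "{w \<in> space M. history N w \<in> H} \<in> sets M"
  shows "measure M {w \<in> space M. history N w \<in> H}
         = (\<Sum>h\<in>histories N \<inter> H. path_prob p (fst h) N) / real (card C) ^ (2 * N)"
proof -
  define atom where "atom h = {w \<in> space M. history N w = h}" for h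
  have atom_sets: "atom ` A \<subseteq> sets M" if "A \<subseteq> histories N" for A
    using that history_atom(1) by (auto simp: atom_def)
  have measure_union: "measure M (\<Union>h\<in>A. atom h) = (\<Sum>h\<in>A. path_prob p (fst h) N) / real (card C) ^ (2 * N)"
    if "A \<subseteq> histories N" for A
  proof -
    have "finite A"
      using that finite_histories finite_subset by blast
    then have "measure M (\<Union>h\<in>A. atom h) = (\<Sum>h\<in>A. measure M (atom h))"
      using atom_sets[OF that] by (intro finite_measure_finite_Union) (auto simp: disjoint_family_on_def atom_def)
    also have "\<dots> = (\<Sum>h\<in>A. path_prob p (fst h) N / real (card C) ^ (2 * N))"
      using that by (intro sum.cong) (auto simp: atom_def history_atom(2))
    finally show ?thesis
      by (simp add: sum_divide_distrib)
  qed
  have "measure M (\<Union>h\<in>histories N. atom h) = 1"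
    using measure_union[of "histories N"]
      sum_histories_Sigma[where N = N and A = UNIV and B = "\<lambda>_. UNIV" and f = "\<lambda>ys. path_prob p ys N"]
      finite_C e_in_C sum_path_prob_nn_paths[of p N]
    by (auto simp: card_lamp_pairs sum_distrib_right[symmetric])
  then have "AE w in M. w \<in> (\<Union>h\<in>histories N. atom h)"
    using atom_sets[of "histories N"] finite_histories by (subst AE_in_set_eq_1) auto
  then have "AE w in M. w \<in> {w \<in> space M. history N w \<in> H} \<longleftrightarrow> w \<in> (\<Union>h\<in>histories N \<inter> H. atom h)"
    by eventually_elim (auto simp: atom_def)
  then have "measure M {w \<in> space M. history N w \<in> H} = measure M (\<Union>h\<in>histories N \<inter> H. atom h)"
    using assms atom_sets[of "histories N \<inter> H"] finite_histories
    by (intro measure_eq_AE) auto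
  then show ?thesis
    using measure_union[of "histories N \<inter> H"] by simp
qed

lemma card_C_pos: "0 < card C"
  using finite_C e_in_C card_gt_0_iff by blast

lemma measure_path_event:
  assumes "{w \<in> space M. restrict (\<lambda>j. S j w) {..N} \<in> P} \<in> sets M"
  shows "measure M {w \<in> space M. restrict (\<lambda>j. S j w) {..N} \<in> P} = (\<Sum>ys\<in>nn_paths N \<inter> P. path_prob p ys N)"
proof -
  have "{w \<in> space M. restrict (\<lambda>j. S j w) {..N} \<in> P} = {w \<in> space M. history N w \<in> Sigma P (\<lambda>_. UNIV)}"
    by (auto simp: history_def)
  moreover have "(\<Sum>h\<in>histories N \<inter> Sigma P (\<lambda>_. UNIV). path_prob p (fst h) N)
      = (\<Sum>ys\<in>nn_paths N \<inter> P. path_prob p ys N) * real (card C) ^ (2 * N)"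
    by (simp add: sum_histories_Sigma[where f = "\<lambda>ys. path_prob p ys N"] card_lamp_pairs sum_distrib_right)
  ultimately show ?thesis
    using measure_history_in_eq_sum[of N "Sigma P (\<lambda>_. UNIV)"] assms card_C_pos by simp
qed

lemma measure_avoids_zero: "measure M {w \<in> space M. avoids_zero r N (\<lambda>j. S j w)} = avoid_prob p r N"
proof -
  have "{w \<in> space M. avoids_zero r N (\<lambda>j. S j w)} \<in> sets M"
    unfolding avoids_zero_def by measurable
  moreover have "{w \<in> space M. avoids_zero r N (\<lambda>j. S j w)}
      = {w \<in> space M. restrict (\<lambda>j. S j w) {..N} \<in> Collect (avoids_zero r N)}"
    by (auto simp: avoids_zero_def)
  moreover have "(\<Sum>ys\<in>nn_paths N \<inter> Collect (avoids_zero r N). path_prob p ys N) = avoid_prob p r N"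
    by (auto simp: avoid_prob_def sum.inter_restrict finite_nn_paths intro!: sum.cong)
  ultimately show ?thesis
    using measure_path_event[of N "Collect (avoids_zero r N)"] by simp
qed

lemma AE_infinitely_many_returns: "AE w in M. \<exists>\<^sub>\<infinity>n. S n w = 0"
proof -
  have "AE w in M. \<exists>n>r. S n w = 0" for r
  proof (rule AE_I')
    let ?Z = "{w \<in> space M. \<forall>n>r. S n w \<noteq> 0}"
    have Z_sets: "?Z \<in> sets M"
      by measurable
    have "measure M ?Z \<le> avoid_prob p r N" for N
      unfolding measure_avoids_zero[of r N, symmetric]
      by (rule finite_measure_mono) (auto simp: avoids_zero_def)
    then have "measure M ?Z \<le> 0"
      by (intro LIMSEQ_le_const[OF avoid_prob_tendsto_0[OF p_gt p_le]]) blast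
    then have "measure M ?Z = 0"
      using measure_nonneg[of M ?Z] by linarith
    then show "?Z \<in> null_sets M"
      using Z_sets by (simp add: emeasure_eq_measure null_setsI)
  qed auto
  then show ?thesis
    by (simp add: AE_all_countable INFM_nat)
qed

lemma measure_lamps_off_prefix:
  assumes "1 \<le> m"
  shows "measure M {w \<in> space M. (\<forall>i. lamps e (\<lambda>j. S j w) (\<lambda>j. U j w) (\<lambda>j. V j w) m i = e) \<and>
                                  (\<forall>j\<le>m. S j w = xs j)}
         = real (card C) powi (- (Max (xs ` {0..m}) - Min (xs ` {0..m}) + 1))
           * measure M {w \<in> space M. \<forall>j\<le>m. S j w = xs j}"
proof -
  define q where "q = real (card C)"
  define c where "c = q powi (- (Max (xs ` {0..m}) - Min (xs ` {0..m}) + 1))"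
  define Pre where "Pre = {ys. \<forall>j\<le>m. ys j = xs j}"
  define Off where "Off ys = {(us, vs). \<forall>i. lamps e ys us vs m i = e}" for ys
  have q_pos: "0 < q"
    using card_C_pos by (simp add: q_def)
  have "lamps e (restrict (\<lambda>j. S j w) {..m}) (restrict (\<lambda>j. U j w) {1..m}) (restrict (\<lambda>j. V j w) {1..m}) m
      = lamps e (\<lambda>j. S j w) (\<lambda>j. U j w) (\<lambda>j. V j w) m" for w
    by (rule lamps_cong) auto
  then have off_event:
    "{w \<in> space M. (\<forall>i. lamps e (\<lambda>j. S j w) (\<lambda>j. U j w) (\<lambda>j. V j w) m i = e) \<and> (\<forall>j\<le>m. S j w = xs j)}
     = {w \<in> space M. history m w \<in> Sigma Pre Off}"
    by (auto simp: history_def Pre_def Off_def)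
  have prefix_event: "{w \<in> space M. \<forall>j\<le>m. S j w = xs j} = {w \<in> space M. restrict (\<lambda>j. S j w) {..m} \<in> Pre}"
    by (auto simp: Pre_def)
  have lamp_count: "real (card (lamp_pairs m \<inter> Off ys)) = q ^ (2 * m) * c" if "ys \<in> nn_paths m \<inter> Pre" for ys
  proof -
    have "\<bar>xs (Suc j) - xs j\<bar> = 1" if "j < m" for j
      using nn_pathsD(3)[of ys m j] \<open>ys \<in> nn_paths m \<inter> Pre\<close> that by (simp add: Pre_def)
    then have "int (card (xs ` {0..m})) = Max (xs ` {0..m}) - Min (xs ` {0..m}) + 1"
      by (rule card_image_unit_steps)
    moreover have "ys ` {..m} = xs ` {0..m}"
      using that by (auto simp: Pre_def atMost_atLeast0)
    ultimately have "int (card (ys ` {..m})) = Max (xs ` {0..m}) - Min (xs ` {0..m}) + 1"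
      by simp
    then have "c = inverse (q ^ card (ys ` {..m}))"
      unfolding c_def by (metis power_int_minus power_int_of_nat)
    then have c_inverse: "c * q ^ card (ys ` {..m}) = 1"
      using q_pos by simp
    have "lamp_pairs m \<inter> Off ys = {(u, v). u \<in> PiE {1..m} (\<lambda>_. C) \<and> v \<in> PiE {1..m} (\<lambda>_. C) \<and>
                                         (\<forall>i. lamps e ys u v m i = e)}"
      by (auto simp: lamp_pairs_def Off_def)
    then have card_real: "real (card (lamp_pairs m \<inter> Off ys)) * q ^ card (ys ` {..m}) = q ^ (2 * m)"
      using card_lamp_choices_all_off[OF finite_C e_in_C assms, of ys] unfolding q_def
      by (metis of_nat_mult of_nat_power)
    have "real (card (lamp_pairs m \<inter> Off ys)) = real (card (lamp_pairs m \<inter> Off ys)) * (c * q ^ card (ys ` {..m}))"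
      using c_inverse by simp
    also have "\<dots> = c * (real (card (lamp_pairs m \<inter> Off ys)) * q ^ card (ys ` {..m}))"
      by (simp only: ac_simps)
    finally show ?thesis
      unfolding card_real by (simp only: mult.commute)
  qed
  have "{w \<in> space M. history m w \<in> Sigma Pre Off} \<in> sets M"
    unfolding off_event[symmetric] by measurable
  then have "measure M {w \<in> space M. history m w \<in> Sigma Pre Off}
      = (\<Sum>h\<in>histories m \<inter> Sigma Pre Off. path_prob p (fst h) m) / q ^ (2 * m)"
    unfolding q_def by (rule measure_history_in_eq_sum)
  also have "(\<Sum>h\<in>histories m \<inter> Sigma Pre Off. path_prob p (fst h) m)
      = (\<Sum>ys\<in>nn_paths m \<inter> Pre. path_prob p ys m * (q ^ (2 * m) * c))"
    unfolding sum_histories_Sigma[where f = "\<lambda>ys. path_prob p ys m"] by (intro sum.cong refl) (simp add: lamp_count)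
  also have "\<dots> / q ^ (2 * m) = c * (\<Sum>ys\<in>nn_paths m \<inter> Pre. path_prob p ys m)"
    using q_pos by (simp add: sum_distrib_left sum_divide_distrib mult.commute mult.left_commute)
  also have "(\<Sum>ys\<in>nn_paths m \<inter> Pre. path_prob p ys m) = measure M {w \<in> space M. \<forall>j\<le>m. S j w = xs j}"
    unfolding prefix_event by (rule measure_path_event[symmetric]) (unfold prefix_event[symmetric], measurable)
  finally show ?thesis
    unfolding off_event c_def q_def .
qed

theorem measure_lamps_off_at_return:
  assumes "1 \<le> k"
  shows "measure M {w \<in> space M. (\<forall>i. lamps e (\<lambda>j. S j w) (\<lambda>j. U j w) (\<lambda>j. V j w) m i = e) \<and>
                                  rho (\<lambda>j. S j w) k = m \<and> (\<forall>j\<le>m. S j w = xs j)}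
         = real (card C) powi (- (Max (xs ` {0..m}) - Min (xs ` {0..m}) + 1))
           * measure M {w \<in> space M. rho (\<lambda>j. S j w) k = m \<and> (\<forall>j\<le>m. S j w = xs j)}"
proof -
  define cut where "cut = (\<lambda>j. if j \<le> m then xs j else 0)"
  define Off where "Off = {w \<in> space M. \<forall>i. lamps e (\<lambda>j. S j w) (\<lambda>j. U j w) (\<lambda>j. V j w) m i = e}"
  define Pre where "Pre = {w \<in> space M. \<forall>j\<le>m. S j w = xs j}"
  define Ret where "Ret = {w \<in> space M. rho (\<lambda>j. S j w) k = m}"
  have sets: "Off \<in> sets M" "Pre \<in> sets M" "Ret \<in> sets M"
    unfolding Off_def Pre_def Ret_def by measurable
  have return_iff: "AE w in M. w \<in> Ret \<inter> Pre \<longleftrightarrow> w \<in> Pre \<and> rho cut k = m"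
    using AE_infinitely_many_returns
  proof eventually_elim
    case (elim w)
    show ?case
    proof (cases "w \<in> Pre")
      case True
      then have "(\<lambda>j. if j \<le> m then S j w else 0) = cut"
        by (auto simp: cut_def Pre_def)
      with True rho_eq_iff_cutoff[OF elim, of k m] show ?thesis
        by (simp add: Ret_def Pre_def)
    qed simp
  qed
  have "AE w in M. w \<in> Off \<inter> (Ret \<inter> Pre) \<longleftrightarrow> w \<in> (if rho cut k = m then Off \<inter> Pre else {})"
    using return_iff by eventually_elim auto
  then have off_ret: "measure M (Off \<inter> (Ret \<inter> Pre)) = measure M (if rho cut k = m then Off \<inter> Pre else {})"
    using sets by (intro measure_eq_AE) auto
  have "AE w in M. w \<in> Ret \<inter> Pre \<longleftrightarrow> w \<in> (if rho cut k = m then Pre else {})"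
    using return_iff by eventually_elim auto
  then have ret: "measure M (Ret \<inter> Pre) = measure M (if rho cut k = m then Pre else {})"
    using sets by (intro measure_eq_AE) auto
  have "1 \<le> m" if "rho cut k = m"
    using rho_less_rho_Suc(1)[OF cutoff_infinitely_many_zeros[of m xs], of "k - 1"] assms that
    by (simp add: cut_def)
  moreover have "Off \<inter> Pre = {w \<in> space M.
      (\<forall>i. lamps e (\<lambda>j. S j w) (\<lambda>j. U j w) (\<lambda>j. V j w) m i = e) \<and> (\<forall>j\<le>m. S j w = xs j)}"
    by (auto simp: Off_def Pre_def)
  ultimately have "measure M (Off \<inter> (Ret \<inter> Pre))
      = real (card C) powi (- (Max (xs ` {0..m}) - Min (xs ` {0..m}) + 1)) * measure M (Ret \<inter> Pre)"
    unfolding off_ret ret using measure_lamps_off_prefix[of m xs] by (simp add: Pre_def)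
  moreover have "Off \<inter> (Ret \<inter> Pre) = {w \<in> space M.
      (\<forall>i. lamps e (\<lambda>j. S j w) (\<lambda>j. U j w) (\<lambda>j. V j w) m i = e) \<and>
      rho (\<lambda>j. S j w) k = m \<and> (\<forall>j\<le>m. S j w = xs j)}"
    and "Ret \<inter> Pre = {w \<in> space M. rho (\<lambda>j. S j w) k = m \<and> (\<forall>j\<le>m. S j w = xs j)}"
    by (auto simp: Off_def Ret_def Pre_def)
  ultimately show ?thesis
    by simp
qed

end

theorem proposition2p2:
  fixes G :: "('f, 'c) monoid_scheme"
    and M :: "'w measure"
    and p :: real
    and S :: "nat \<Rightarrow> 'w \<Rightarrow> int"
    and U V :: "nat \<Rightarrow> 'w \<Rightarrow> 'f"
  assumes "group G" and "finite (carrier G)" and "card (carrier G) > 1"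
    and "1/2 < p" and "p < 1"
    and "prob_space M"
    and "\<And>n. S n \<in> measurable M (count_space UNIV)"
    and "\<And>n. U n \<in> measurable M (count_space UNIV)"
    and "\<And>n. V n \<in> measurable M (count_space UNIV)"
    and law: "\<And>n xs us vs. (\<forall>j. us j \<in> carrier G \<and> vs j \<in> carrier G) \<Longrightarrow>
         measure M {w \<in> space M. (\<forall>j\<le>n. S j w = xs j) \<and>
                                  (\<forall>j\<in>{1..n}. U j w = us j \<and> V j w = vs j)}
         = path_prob p xs n / real (card (carrier G)) ^ (2 * n)"
    and "k \<ge> 1"
  shows "measure M {w \<in> space M.
             (\<forall>i. lamps \<one>\<^bsub>G\<^esub> (\<lambda>j. S j w) (\<lambda>j. U j w) (\<lambda>j. V j w) m i = \<one>\<^bsub>G\<^esub>) \<and>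
             rho (\<lambda>j. S j w) k = m \<and> (\<forall>j\<le>m. S j w = xs j)}
       = real (card (carrier G)) powi (- (Max (xs ` {0..m}) - Min (xs ` {0..m}) + 1))
         * measure M {w \<in> space M. rho (\<lambda>j. S j w) k = m \<and> (\<forall>j\<le>m. S j w = xs j)}"
proof -
  interpret lamplighter_walk M "carrier G" "\<one>\<^bsub>G\<^esub>" p S U V
  proof (intro lamplighter_walk.intro lamplighter_walk_axioms.intro)
    show "\<one>\<^bsub>G\<^esub> \<in> carrier G"
      using \<open>group G\<close> by (simp add: group.is_monoid monoid.one_closed)
    show "p \<le> 1"
      using \<open>p < 1\<close> by simp
  qed (fact assms)+
  show ?thesis
    using \<open>k \<ge> 1\<close> by (rule measure_lamps_off_at_return)
qed

end
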